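(* There exist instances of the multi-agent binary-action contract model (described in the context), with additive reward functions and $n$ agents for every $n$, whose price of equality is $\Omega\left(\frac{\log n}{\log\log n}\right)$.
   Context: Model: principal and agents $A=[n]$; each agent $i$ has a finite action set $T_i$ (pairwise disjoint), $T=\bigsqcup_iT_i$, costs $c_j\ge0$ with $c(S_i)=\sum_{j\in S_i}c_j$; in the binary-action model $|T_i|=1$ for all $i$. Reward $f:2^T\to[0,1]$ monotone, $f(\emptyset)=0$; $f$ is additive if $f(S)=\sum_{a\in S}f(\{a\})$. Contract $\boldsymbol{\alpha}\in[0,1]^A$; agent $i$'s utility $\alpha_if(S)-c(S\cap T_i)$; $S\in\mathsf{NE}(\boldsymbol{\alpha})$ (pure Nash equilibrium) if no agent can gain by changing her own subset of actions. Principal's utility $(1-\sum_i\alpha_i)f(S)$. A contract is equal-pay if all its nonzero entries are equal. The price of equality of an instance is $\dfrac{\max_{\boldsymbol{\alpha},\,S\in\mathsf{NE}(\boldsymbol{\alpha})}(1-\sum_i\alpha_i)f(S)}{\max_{\boldsymbol{\alpha}\text{ equal-pay},\,S\in\mathsf{NE}(\boldsymbol{\alpha})}(1-\sum_i\alpha_i)f(S)}$. *)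

theory Defs
  imports Complex_Main
begin

text \<open>Agents are 0,...,n-1; agent i owns
the single action i, so the action set T is identified with the agent set {..<n}
and a set of taken actions is a subset S of {..<n}.\<close>

definition cost :: "(nat \<Rightarrow> real) \<Rightarrow> nat set \<Rightarrow> real" where
  "cost c S = (\<Sum>j\<in>S. c j)"

definition binary_additive_instance ::
  "nat \<Rightarrow> (nat \<Rightarrow> real) \<Rightarrow> (nat set \<Rightarrow> real) \<Rightarrow> bool" where
  "binary_additive_instance n c f \<longleftrightarrow>
     (\<forall>i<n. 0 \<le> c i) \<and>
     f {} = 0 \<and>
     (\<forall>S. S \<subseteq> {..<n} \<longrightarrow> 0 \<le> f S \<and> f S \<le> 1) \<and>
     (\<forall>S T. S \<subseteq> T \<and> T \<subseteq> {..<n} \<longrightarrow> f S \<le> f T) \<and>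
     (\<forall>S. S \<subseteq> {..<n} \<longrightarrow> f S = (\<Sum>a\<in>S. f {a}))"

definition contract :: "nat \<Rightarrow> (nat \<Rightarrow> real) \<Rightarrow> bool" where
  "contract n \<alpha> \<longleftrightarrow> (\<forall>i<n. 0 \<le> \<alpha> i \<and> \<alpha> i \<le> 1)"

definition equal_pay :: "nat \<Rightarrow> (nat \<Rightarrow> real) \<Rightarrow> bool" where
  "equal_pay n \<alpha> \<longleftrightarrow> (\<forall>i<n. \<forall>j<n. \<alpha> i \<noteq> 0 \<longrightarrow> \<alpha> j \<noteq> 0 \<longrightarrow> \<alpha> i = \<alpha> j)"

definition is_NE ::
  "nat \<Rightarrow> (nat \<Rightarrow> real) \<Rightarrow> (nat set \<Rightarrow> real) \<Rightarrow> (nat \<Rightarrow> real) \<Rightarrow> nat set \<Rightarrow> bool" where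
  "is_NE n c f \<alpha> S \<longleftrightarrow> S \<subseteq> {..<n} \<and>
     (\<forall>i<n. \<forall>X. X \<subseteq> {i} \<longrightarrow>
        \<alpha> i * f ((S - {i}) \<union> X) - cost c X \<le> \<alpha> i * f S - cost c (S \<inter> {i}))"

definition principal_utility :: "nat \<Rightarrow> (nat set \<Rightarrow> real) \<Rightarrow> (nat \<Rightarrow> real) \<Rightarrow> nat set \<Rightarrow> real" where
  "principal_utility n f \<alpha> S = (1 - (\<Sum>i<n. \<alpha> i)) * f S"

definition opt_utility :: "nat \<Rightarrow> (nat \<Rightarrow> real) \<Rightarrow> (nat set \<Rightarrow> real) \<Rightarrow> real" where
  "opt_utility n c f = Sup {principal_utility n f \<alpha> S | \<alpha> S. contract n \<alpha> \<and> is_NE n c f \<alpha> S}"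

definition opt_equal_pay_utility :: "nat \<Rightarrow> (nat \<Rightarrow> real) \<Rightarrow> (nat set \<Rightarrow> real) \<Rightarrow> real" where
  "opt_equal_pay_utility n c f = Sup {principal_utility n f \<alpha> S | \<alpha> S.
      contract n \<alpha> \<and> equal_pay n \<alpha> \<and> is_NE n c f \<alpha> S}"

definition price_of_equality :: "nat \<Rightarrow> (nat \<Rightarrow> real) \<Rightarrow> (nat set \<Rightarrow> real) \<Rightarrow> real" where
  "price_of_equality n c f = opt_utility n c f / opt_equal_pay_utility n c f"

end

theory Submission
  imports Defs "HOL-Analysis.Harmonic_Numbers"
begin

text \<open>Agent \<open>i\<close> (counting from 1) contributes the reward \<open>1 / (i H\<^sub>n)\<close> at half its
square as cost. Paying every agent half its reward makes all of them work and leaves the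
principal \<open>1/2\<close>. Under an equal payment \<open>a\<close>, an agent works only if its reward is at most
\<open>2a\<close>, and the principal gains only if the \<open>s\<close> workers cost \<open>s a < 1\<close>. But \<open>s\<close> harmonic terms
\<open>1/i\<close>, each at most \<open>2 a H\<^sub>n\<close>, sum to at most \<open>2 + ln (2 a H\<^sub>n s) \<le> 2 + ln (2 H\<^sub>n)\<close>, so
every equal-pay contract yields only \<open>O(ln H\<^sub>n / H\<^sub>n) = O(ln ln n / ln n)\<close>.\<close>

lemma binary_additive_instanceD:
  assumes "binary_additive_instance n c f"
  shows "i < n \<Longrightarrow> 0 \<le> c i" and "S \<subseteq> {..<n} \<Longrightarrow> 0 \<le> f S"
    and "S \<subseteq> {..<n} \<Longrightarrow> f S \<le> 1" and "S \<subseteq> {..<n} \<Longrightarrow> f S = (\<Sum>a\<in>S. f {a})"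
  using assms unfolding binary_additive_instance_def by blast+

lemma additive_reward_insert:
  assumes inst: "binary_additive_instance n c f" and S: "S \<subseteq> {..<n}" and "i < n" "i \<notin> S"
  shows "f (insert i S) = f S + f {i}"
proof -
  have fin: "finite S" using S finite_subset by blast
  have "f (insert i S) = (\<Sum>a\<in>insert i S. f {a})"
    using binary_additive_instanceD(4)[OF inst] S \<open>i < n\<close> by simp
  also have "\<dots> = f {i} + (\<Sum>a\<in>S. f {a})" using fin \<open>i \<notin> S\<close> by simp
  also have "(\<Sum>a\<in>S. f {a}) = f S" using binary_additive_instanceD(4)[OF inst S] by simp
  finally show ?thesis by simp
qed

lemma is_NE_additive_iff:
  assumes inst: "binary_additive_instance n c f"
  shows "is_NE n c f \<alpha> S \<longleftrightarrow> S \<subseteq> {..<n} \<and> (\<forall>i\<in>S. c i \<le> \<alpha> i * f {i}) \<and>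
           (\<forall>i<n. i \<notin> S \<longrightarrow> \<alpha> i * f {i} \<le> c i)"
proof -
  have agent: "(\<forall>X. X \<subseteq> {i} \<longrightarrow>
        \<alpha> i * f ((S - {i}) \<union> X) - cost c X \<le> \<alpha> i * f S - cost c (S \<inter> {i}))
      \<longleftrightarrow> (if i \<in> S then c i \<le> \<alpha> i * f {i} else \<alpha> i * f {i} \<le> c i)"
    if S: "S \<subseteq> {..<n}" and i: "i < n" for i
  proof (cases "i \<in> S")
    case True
    have "f S = f (S - {i}) + f {i}"
      using additive_reward_insert[OF inst _ i, of "S - {i}"] S True by (auto simp: insert_absorb)
    moreover have "S - {i} \<union> {i} = S" "S \<inter> {i} = {i}" using True by auto
    ultimately show ?thesis using True by (auto simp: subset_singleton_iff cost_def algebra_simps)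
  next
    case False
    have "f (S \<union> {i}) = f S + f {i}" using additive_reward_insert[OF inst S i False] by simp
    moreover have "S - {i} = S" "S \<inter> {i} = {}" using False by auto
    ultimately show ?thesis using False by (auto simp: subset_singleton_iff cost_def algebra_simps)
  qed
  show ?thesis
  proof (cases "S \<subseteq> {..<n}")
    case True
    then show ?thesis unfolding is_NE_def by (auto simp: agent split: if_splits)
  qed (simp add: is_NE_def)
qed

lemma is_NE_zero_contract:
  assumes "binary_additive_instance n c f"
  shows "is_NE n c f (\<lambda>_. 0) {}"
  using binary_additive_instanceD(1)[OF assms] by (simp add: is_NE_additive_iff[OF assms])

lemma principal_utility_le_one:
  assumes inst: "binary_additive_instance n c f" and ct: "contract n \<alpha>" and ne: "is_NE n c f \<alpha> S"
  shows "principal_utility n f \<alpha> S \<le> 1"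
proof -
  have "S \<subseteq> {..<n}" using ne by (simp add: is_NE_def)
  then have f: "0 \<le> f S" "f S \<le> 1" using binary_additive_instanceD[OF inst] by blast+
  have "0 \<le> (\<Sum>i<n. \<alpha> i)" using ct by (auto simp: contract_def intro: sum_nonneg)
  then have "0 \<le> (\<Sum>i<n. \<alpha> i) * f S" using f by simp
  then show ?thesis using f by (simp add: principal_utility_def algebra_simps)
qed

lemma le_opt_utility:
  assumes "binary_additive_instance n c f" "contract n \<alpha>" "is_NE n c f \<alpha> S"
  shows "principal_utility n f \<alpha> S \<le> opt_utility n c f"
  unfolding opt_utility_def
proof (rule cSup_upper)
  show "bdd_above {principal_utility n f \<alpha> S | \<alpha> S. contract n \<alpha> \<and> is_NE n c f \<alpha> S}"
    using principal_utility_le_one[OF assms(1)] by (intro bdd_aboveI[of _ 1]) blast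
qed (use assms in blast)

lemma le_opt_equal_pay_utility:
  assumes "binary_additive_instance n c f" "contract n \<alpha>" "equal_pay n \<alpha>" "is_NE n c f \<alpha> S"
  shows "principal_utility n f \<alpha> S \<le> opt_equal_pay_utility n c f"
  unfolding opt_equal_pay_utility_def
proof (rule cSup_upper)
  show "bdd_above {principal_utility n f \<alpha> S | \<alpha> S.
      contract n \<alpha> \<and> equal_pay n \<alpha> \<and> is_NE n c f \<alpha> S}"
    using principal_utility_le_one[OF assms(1)] by (intro bdd_aboveI[of _ 1]) blast
qed (use assms in blast)

lemma opt_equal_pay_utility_le:
  assumes inst: "binary_additive_instance n c f"
    and bound: "\<And>\<alpha> S. contract n \<alpha> \<Longrightarrow> equal_pay n \<alpha> \<Longrightarrow> is_NE n c f \<alpha> S \<Longrightarrow>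
                  principal_utility n f \<alpha> S \<le> B"
  shows "opt_equal_pay_utility n c f \<le> B"
  unfolding opt_equal_pay_utility_def
proof (rule cSup_least)
  have "contract n (\<lambda>_. 0)" "equal_pay n (\<lambda>_. 0)"
    by (simp_all add: contract_def equal_pay_def)
  then show "{principal_utility n f \<alpha> S | \<alpha> S.
      contract n \<alpha> \<and> equal_pay n \<alpha> \<and> is_NE n c f \<alpha> S} \<noteq> {}"
    using is_NE_zero_contract[OF inst] by blast
qed (use bound in blast)

lemma price_of_equality_ge:
  assumes "0 \<le> A" "A \<le> opt_utility n c f"
    and "0 < opt_equal_pay_utility n c f" "opt_equal_pay_utility n c f \<le> B"
  shows "A / B \<le> price_of_equality n c f"
proof -
  have "A / B \<le> A / opt_equal_pay_utility n c f"
    using assms by (intro divide_left_mono) auto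
  also have "\<dots> \<le> price_of_equality n c f"
    unfolding price_of_equality_def using assms by (intro divide_right_mono) auto
  finally show ?thesis .
qed

lemma equal_pay_card_le_sum:
  assumes ct: "contract n \<alpha>" and ep: "equal_pay n \<alpha>" and S: "S \<subseteq> {..<n}"
    and paid: "\<forall>i\<in>S. \<alpha> i \<noteq> 0" and j: "j \<in> S"
  shows "real (card S) * \<alpha> j \<le> (\<Sum>i<n. \<alpha> i)"
proof -
  have "(\<Sum>i\<in>S. \<alpha> i) = (\<Sum>i\<in>S. \<alpha> j)"
    using ep S paid j unfolding equal_pay_def by (intro sum.cong) blast+
  then have "real (card S) * \<alpha> j = (\<Sum>i\<in>S. \<alpha> i)" by simp
  also have "\<dots> \<le> (\<Sum>i<n. \<alpha> i)"
    using ct S by (intro sum_mono2) (auto simp: contract_def)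
  finally show ?thesis .
qed

lemma sum_inverse_atLeastAtMost_le:
  assumes "1 \<le> m" "m \<le> k"
  shows "(\<Sum>j=m..k. inverse (real j)) \<le> inverse (real m) + ln (real k / real m)"
proof -
  have "(\<Sum>j=m..k. inverse (real j)) = harm k - harm m + inverse (real m)"
    using assms(2) by (induction k rule: dec_induct) (simp_all add: harm_Suc sum.cl_ivl_Suc)
  also have "harm k - harm m \<le> ln (real k) - ln (real m)"
    using euler_mascheroni_sequence_decreasing[of m k] assms by simp
  also have "ln (real k) - ln (real m) = ln (real k / real m)"
    using assms by (simp add: ln_div)
  finally show ?thesis by simp
qed

lemma harm_le_one_plus_ln:
  assumes "0 < n"
  shows "harm n \<le> 1 + ln (real n)"
  using euler_mascheroni_sequence_decreasing[of 1 n] assms by (simp add: harm_expand(2))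

lemma sum_inverse_Suc_le:
  fixes S :: "nat set" and b K :: real
  assumes fin: "finite S" and K: "1 \<le> K"
    and small: "\<forall>i\<in>S. inverse (real (Suc i)) \<le> b" and few: "real (card S) * b \<le> K"
  shows "(\<Sum>i\<in>S. inverse (real (Suc i))) \<le> 2 + ln K"
proof (cases "S = {}")
  case True
  then show ?thesis using K by simp
next
  case False
  define s where "s = card S"
  have s: "0 < s" using fin False by (simp add: s_def card_gt_0_iff)
  have b: "0 < b" using small False by (meson all_not_in_conv inverse_positive_iff_positive
        of_nat_0_less_iff order_less_le_trans zero_less_Suc)
  define m where "m = nat \<lceil>inverse b\<rceil>"
  have m: "inverse b \<le> real m" unfolding m_def by (rule real_nat_ceiling_ge)
  then have "0 < real m" using b by (meson inverse_positive_iff_positive order_less_le_trans)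
  then have m1: "1 \<le> m" by simp
  txt \<open>The at most \<open>s\<close> indices \<open>i \<ge> s\<close> contribute at most \<open>1/s\<close> each; the remaining ones
    satisfy \<open>1/b \<le> i + 1 \<le> s\<close>, a stretch of the harmonic series of sum about \<open>ln (s b)\<close>.\<close>
  have high: "(\<Sum>i\<in>S - {..<s}. inverse (real (Suc i))) \<le> 1"
  proof -
    have "(\<Sum>i\<in>S - {..<s}. inverse (real (Suc i)))
        \<le> real (card (S - {..<s})) * inverse (real s)"
      by (rule sum_bounded_above) (use s in \<open>auto simp: field_simps\<close>)
    also have "\<dots> \<le> real s * inverse (real s)"
      using fin by (intro mult_right_mono) (auto simp: s_def intro: card_mono)
    finally show ?thesis using s by simp
  qed
  have low_indices: "Suc ` (S \<inter> {..<s}) \<subseteq> {m..s}"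
  proof
    fix j assume "j \<in> Suc ` (S \<inter> {..<s})"
    then obtain i where i: "i \<in> S" "i < s" "j = Suc i" by auto
    have "inverse b \<le> real (Suc i)"
      using small i(1) b by (simp add: inverse_le_imp_le field_simps)
    then have "m \<le> Suc i" unfolding m_def by linarith
    then show "j \<in> {m..s}" using i by auto
  qed
  have "(\<Sum>i\<in>S \<inter> {..<s}. inverse (real (Suc i))) = (\<Sum>j\<in>Suc ` (S \<inter> {..<s}). inverse (real j))"
    by (simp add: sum.reindex)
  also have "\<dots> \<le> (\<Sum>j=m..s. inverse (real j))"
    using low_indices by (intro sum_mono2) auto
  also have "\<dots> \<le> 1 + ln K"
  proof (cases "m \<le> s")
    case True
    have "real s / real m \<le> real s * b"
      using m b m1 s by (simp add: field_simps)
    also have "\<dots> \<le> K" using few by (simp add: s_def)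
    finally have "ln (real s / real m) \<le> ln K" using s m1 by (intro ln_mono) auto
    moreover have "inverse (real m) \<le> 1" using m1 by (simp add: inverse_le_1_iff)
    ultimately show ?thesis using sum_inverse_atLeastAtMost_le[OF m1 True] by linarith
  qed (use K in simp)
  finally show ?thesis
    using high sum.Int_Diff[OF fin, of "\<lambda>i. inverse (real (Suc i))" "{..<s}"] by linarith
qed

definition harmonic_weight :: "nat \<Rightarrow> nat \<Rightarrow> real" where
  "harmonic_weight n i = inverse (real (Suc i)) / harm n"

definition harmonic_reward :: "nat \<Rightarrow> nat set \<Rightarrow> real" where
  "harmonic_reward n S = (\<Sum>i\<in>S. harmonic_weight n i)"

definition harmonic_cost :: "nat \<Rightarrow> nat \<Rightarrow> real" where
  "harmonic_cost n i = harmonic_weight n i ^ 2 / 2"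

lemma harmonic_weight_pos: "0 < n \<Longrightarrow> 0 < harmonic_weight n i"
  by (simp add: harmonic_weight_def)

lemma sum_harmonic_weight:
  assumes "0 < n"
  shows "(\<Sum>i<n. harmonic_weight n i) = 1"
proof -
  have "(\<Sum>i<n. harmonic_weight n i) = harm n / harm n"
    unfolding harmonic_weight_def harm_altdef by (rule sum_divide_distrib[symmetric])
  then show ?thesis using harm_pos[OF assms, where 'a = real] by simp
qed

lemma harmonic_weight_le_one:
  assumes "0 < n" "i < n"
  shows "harmonic_weight n i \<le> 1"
proof -
  have "harmonic_weight n i \<le> (\<Sum>i<n. harmonic_weight n i)"
    using assms harmonic_weight_pos[OF assms(1)] by (intro member_le_sum) (auto intro: less_imp_le)
  then show ?thesis using sum_harmonic_weight[OF assms(1)] by simp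
qed

lemma binary_additive_instance_harmonic:
  assumes n: "0 < n"
  shows "binary_additive_instance n (harmonic_cost n) (harmonic_reward n)"
proof -
  have nonneg: "0 \<le> harmonic_weight n i" for i using harmonic_weight_pos[OF n] less_imp_le by blast
  have mono: "harmonic_reward n S \<le> harmonic_reward n T" if "S \<subseteq> T" "T \<subseteq> {..<n}" for S T
    unfolding harmonic_reward_def using that nonneg by (intro sum_mono2) (auto intro: finite_subset)
  moreover have "harmonic_reward n S \<le> 1" if "S \<subseteq> {..<n}" for S
    using mono[OF that order.refl] sum_harmonic_weight[OF n] by (simp add: harmonic_reward_def)
  moreover have "0 \<le> harmonic_reward n S" for S
    unfolding harmonic_reward_def using nonneg by (simp add: sum_nonneg)
  ultimately show ?thesis
    unfolding binary_additive_instance_def by (auto simp: harmonic_cost_def harmonic_reward_def)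
qed

lemma is_NE_harmonic_iff:
  assumes n: "0 < n"
  shows "is_NE n (harmonic_cost n) (harmonic_reward n) \<alpha> S \<longleftrightarrow> S \<subseteq> {..<n} \<and>
           (\<forall>i\<in>S. harmonic_weight n i / 2 \<le> \<alpha> i) \<and>
           (\<forall>i<n. i \<notin> S \<longrightarrow> \<alpha> i \<le> harmonic_weight n i / 2)"
proof -
  have "harmonic_cost n i \<le> \<alpha> i * harmonic_reward n {i} \<longleftrightarrow> harmonic_weight n i / 2 \<le> \<alpha> i"
    "\<alpha> i * harmonic_reward n {i} \<le> harmonic_cost n i \<longleftrightarrow> \<alpha> i \<le> harmonic_weight n i / 2" for i
    using harmonic_weight_pos[OF n, of i]
    by (simp_all add: harmonic_cost_def harmonic_reward_def power2_eq_square mult_le_cancel_right)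
  then show ?thesis by (simp add: is_NE_additive_iff[OF binary_additive_instance_harmonic[OF n]])
qed

lemma opt_utility_harmonic_ge:
  assumes n: "0 < n"
  shows "1 / 2 \<le> opt_utility n (harmonic_cost n) (harmonic_reward n)"
proof -
  define \<alpha> where "\<alpha> i = harmonic_weight n i / 2" for i
  have "contract n \<alpha>"
    unfolding contract_def \<alpha>_def
    using harmonic_weight_pos[OF n] harmonic_weight_le_one[OF n] by (fastforce intro: less_imp_le)
  moreover have "is_NE n (harmonic_cost n) (harmonic_reward n) \<alpha> {..<n}"
    by (simp add: is_NE_harmonic_iff[OF n] \<alpha>_def)
  moreover have "principal_utility n (harmonic_reward n) \<alpha> {..<n} = 1 / 2"
    using sum_harmonic_weight[OF n]
    by (simp add: principal_utility_def harmonic_reward_def \<alpha>_def sum_divide_distrib[symmetric])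
  ultimately show ?thesis
    using le_opt_utility[OF binary_additive_instance_harmonic[OF n]] by metis
qed

lemma opt_equal_pay_utility_harmonic_pos:
  assumes n: "0 < n"
  shows "0 < opt_equal_pay_utility n (harmonic_cost n) (harmonic_reward n)"
proof -
  define w where "w = harmonic_weight n 0"
  define \<alpha> where "\<alpha> (i :: nat) = (if i = 0 then w / 2 else 0)" for i
  have w: "0 < w" "w \<le> 1"
    using harmonic_weight_pos[OF n] harmonic_weight_le_one[OF n] n by (simp_all add: w_def)
  have "contract n \<alpha>" "equal_pay n \<alpha>"
    using w by (auto simp: contract_def equal_pay_def \<alpha>_def)
  moreover have "is_NE n (harmonic_cost n) (harmonic_reward n) \<alpha> {0}"
    using n harmonic_weight_pos[OF n] by (auto simp: is_NE_harmonic_iff[OF n] \<alpha>_def w_def less_imp_le)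
  moreover have "principal_utility n (harmonic_reward n) \<alpha> {0} = (1 - w / 2) * w"
    using n by (simp add: principal_utility_def harmonic_reward_def \<alpha>_def w_def)
  moreover have "0 < (1 - w / 2) * w" using w by simp
  ultimately show ?thesis
    using le_opt_equal_pay_utility[OF binary_additive_instance_harmonic[OF n]] by fastforce
qed

lemma equal_pay_utility_harmonic_le:
  assumes n: "0 < n" and ct: "contract n \<alpha>" and ep: "equal_pay n \<alpha>"
    and ne: "is_NE n (harmonic_cost n) (harmonic_reward n) \<alpha> S"
  shows "principal_utility n (harmonic_reward n) \<alpha> S \<le> (2 + ln (2 * harm n)) / harm n"
proof -
  define H :: real where "H = harm n"
  have H: "1 \<le> H" using harm_mono[of 1 n] n by (simp add: H_def harm_expand(2))
  have S: "S \<subseteq> {..<n}" and paid: "\<forall>i\<in>S. harmonic_weight n i / 2 \<le> \<alpha> i"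
    using ne by (simp_all add: is_NE_harmonic_iff[OF n])
  have paid_pos: "\<forall>i\<in>S. 0 < \<alpha> i"
    using paid harmonic_weight_pos[OF n] by (meson half_gt_zero order_less_le_trans)
  have reward: "0 \<le> harmonic_reward n S"
    using binary_additive_instanceD(2)[OF binary_additive_instance_harmonic[OF n] S] .
  have bound: "0 \<le> (2 + ln (2 * H)) / H" using H by simp
  show ?thesis
  proof (cases "S = {}")
    case True
    then show ?thesis using bound by (simp add: principal_utility_def harmonic_reward_def H_def)
  next
    case False
    then obtain j where j: "j \<in> S" by blast
    define a where "a = \<alpha> j"
    have pay: "real (card S) * a \<le> (\<Sum>i<n. \<alpha> i)"
      unfolding a_def using paid_pos by (intro equal_pay_card_le_sum[OF ct ep S _ j]) auto
    show ?thesis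
    proof (cases "real (card S) * a < 1")
      case False
      then have "(1 - (\<Sum>i<n. \<alpha> i)) * harmonic_reward n S \<le> 0"
        using pay reward by (intro mult_nonpos_nonneg) auto
      then show ?thesis using bound by (simp add: principal_utility_def H_def)
    next
      case True
      have equal: "\<alpha> i = a" if "i \<in> S" for i
        using ep S j that paid_pos unfolding equal_pay_def a_def by (metis lessThan_iff subsetD less_irrefl)
      have "(\<Sum>i\<in>S. inverse (real (Suc i))) \<le> 2 + ln (2 * H)"
      proof (rule sum_inverse_Suc_le)
        show "finite S" using S finite_subset by blast
        show "1 \<le> 2 * H" using H by simp
        show "\<forall>i\<in>S. inverse (real (Suc i)) \<le> 2 * a * H"
        proof
          fix i assume "i \<in> S"
          then have "inverse (real (Suc i)) / H / 2 \<le> a"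
            using paid equal by (auto simp: harmonic_weight_def H_def)
          then show "inverse (real (Suc i)) \<le> 2 * a * H"
            using H by (simp add: divide_le_eq mult.commute mult.left_commute)
        qed
        show "real (card S) * (2 * a * H) \<le> 2 * H"
          using True H by (simp add: mult_le_cancel_right1)
      qed
      then have small_reward: "harmonic_reward n S \<le> (2 + ln (2 * H)) / H"
        using H by (simp add: harmonic_reward_def harmonic_weight_def H_def
            sum_divide_distrib[symmetric] divide_right_mono)
      have "0 \<le> (\<Sum>i<n. \<alpha> i)" using ct by (auto simp: contract_def intro: sum_nonneg)
      then have "principal_utility n (harmonic_reward n) \<alpha> S \<le> harmonic_reward n S"
        using reward by (simp add: principal_utility_def algebra_simps)
      then show ?thesis using small_reward by (simp add: H_def)
    qed
  qed
qed

lemma price_of_equality_harmonic_ge: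
  assumes n: "0 < n"
  shows "harm n / (2 * (2 + ln (2 * harm n))) \<le>
           price_of_equality n (harmonic_cost n) (harmonic_reward n)"
proof -
  have "opt_equal_pay_utility n (harmonic_cost n) (harmonic_reward n) \<le> (2 + ln (2 * harm n)) / harm n"
    using equal_pay_utility_harmonic_le[OF n]
    by (intro opt_equal_pay_utility_le[OF binary_additive_instance_harmonic[OF n]])
  then have "(1 / 2) / ((2 + ln (2 * harm n)) / harm n) \<le>
      price_of_equality n (harmonic_cost n) (harmonic_reward n)"
    using opt_utility_harmonic_ge[OF n] opt_equal_pay_utility_harmonic_pos[OF n]
    by (intro price_of_equality_ge) auto
  then show ?thesis by simp
qed

lemma ln_3_ge_1: "1 \<le> ln (3::real)"
  using exp_le by (subst ln_ge_iff) auto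

lemma ratio_ge_ln_div_ln_ln:
  fixes L D :: real
  assumes L: "9 \<le> L" and D: "L \<le> D" "D \<le> 1 + L"
  shows "1 / 8 * L / ln L \<le> D / (2 * (2 + ln (2 * D)))"
proof -
  have "2 * ln 3 = ln (9::real)" using ln_mult[of 3 3] by simp
  also have "\<dots> \<le> ln L" using L by simp
  finally have lnL: "2 * ln 3 \<le> ln L" .
  have "ln (2 * D) \<le> ln (3 * L)" using D L by simp
  also have "\<dots> = ln 3 + ln L" using L by (simp add: ln_mult)
  finally have "2 + ln (2 * D) \<le> 5 / 2 * ln L" using lnL ln_3_ge_1 by linarith
  moreover have "0 < 2 + ln (2 * D)"
    using D L by (simp add: add_pos_nonneg)
  ultimately have "L / (5 * ln L) \<le> L / (2 * (2 + ln (2 * D)))"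
    using L by (intro divide_left_mono) auto
  also have "\<dots> \<le> D / (2 * (2 + ln (2 * D)))"
    using D \<open>0 < 2 + ln (2 * D)\<close> by (intro divide_right_mono) auto
  finally show ?thesis using lnL ln_3_ge_1 L by (simp add: field_simps)
qed

theorem proposition5p2:
  shows "\<exists>C>0. \<exists>N::nat. \<forall>n\<ge>N. \<exists>c f. binary_additive_instance n c f \<and>
           price_of_equality n c f \<ge> C * ln (real n) / ln (ln (real n))"
proof (intro exI[of _ "1 / 8"] conjI exI[of _ "3 ^ 9"] allI impI)
  fix n :: nat
  assume n: "3 ^ 9 \<le> n"
  then have "0 < n" by simp
  have "9 \<le> 9 * ln (3::real)" using ln_3_ge_1 by simp
  also have "\<dots> = ln (3 ^ 9)" by (subst ln_realpow) auto
  also have "\<dots> \<le> ln (real n)" using n by (subst ln_le_cancel_iff) (auto simp del: power_numeral_reduce)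
  finally have L: "9 \<le> ln (real n)" .
  have "ln (real n) \<le> ln (real n + 1)" using \<open>0 < n\<close> by simp
  then have "ln (real n) \<le> harm n" using ln_le_harm[of n] by linarith
  with L have "1 / 8 * ln (real n) / ln (ln (real n)) \<le> harm n / (2 * (2 + ln (2 * harm n)))"
    using harm_le_one_plus_ln[OF \<open>0 < n\<close>] by (rule ratio_ge_ln_div_ln_ln)
  also have "\<dots> \<le> price_of_equality n (harmonic_cost n) (harmonic_reward n)"
    by (rule price_of_equality_harmonic_ge[OF \<open>0 < n\<close>])
  finally show "\<exists>c f. binary_additive_instance n c f \<and>
      1 / 8 * ln (real n) / ln (ln (real n)) \<le> price_of_equality n c f"
    using binary_additive_instance_harmonic[OF \<open>0 < n\<close>] by blast
qed (simp)

end
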